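(* In the perceptive model, suppose each agent knows (i) the positions of its two ring neighbours relative to its initial position, and (ii) for each neighbour, whether that neighbour's sense of direction agrees with its own. Then each agent can transmit one bit of information to its neighbours in $O(1)$ rounds; that is, all agents simultaneously transmit one bit each to both neighbours in $O(1)$ rounds.
   Context: Model (perceptive): $n>4$ agents are at distinct, arbitrary initial positions on a circle of circumference $1$ and act in synchronised unit-time rounds. Each agent has its own notion of right (clockwise) and left; these need not be consistent across agents. At the start of each round every agent $a$ chooses $\mathrm{dir}_a\in\{\text{right},\text{left}\}$ and moves at unit speed. Agents never pass: two colliding agents instantly reverse direction. There is no direct communication and no marking. At the end of each round every agent learns two values, both measured relative to its start-of-round position and in its own orientation: - the clockwise distance to its end-of-round position; - the distance to its first collision in that round. The neighbours of an agent are the agents immediately adjacent to it on the ring; agents never overtake, so neighbours stay fixed. *)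

theory Defs
  imports Complex_Main
begin

text \<open>Perceptive model of n agents on a circle of circumference 1.
  Agents are labelled 0..n-1 in clockwise (increasing position) order;
  positions lie in [0,1). Index arithmetic is mod n.
  cw i = True  iff agent i's own "right" is the global clockwise direction.\<close>

type_synonym obs = "real \<times> real option"
  \<comment> \<open>(distance to end-of-round position measured in own right direction,
      distance to first collision, None if no collision occurs in the round)\<close>

definition odist :: "bool \<Rightarrow> real \<Rightarrow> real \<Rightarrow> real" where
  "odist c x y = frac (if c then y - x else x - y)"

definition succ_idx :: "nat \<Rightarrow> nat \<Rightarrow> nat" where
  "succ_idx n i = Suc i mod n"

definition pred_idx :: "nat \<Rightarrow> nat \<Rightarrow> nat" where
  "pred_idx n i = (i + n - 1) mod n"

definition right_nb :: "nat \<Rightarrow> (nat \<Rightarrow> bool) \<Rightarrow> nat \<Rightarrow> nat" where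
  "right_nb n cw i = (if cw i then succ_idx n i else pred_idx n i)"

definition left_nb :: "nat \<Rightarrow> (nat \<Rightarrow> bool) \<Rightarrow> nat \<Rightarrow> nat" where
  "left_nb n cw i = (if cw i then pred_idx n i else succ_idx n i)"

definition valid_config :: "nat \<Rightarrow> (nat \<Rightarrow> real) \<Rightarrow> bool" where
  "valid_config n pos \<longleftrightarrow>
     (\<forall>i<n. 0 \<le> pos i \<and> pos i < 1) \<and> (\<forall>i j. i < j \<and> j < n \<longrightarrow> pos i < pos j)"

record knowledge =
  own_bit :: bool
  gap_right :: real
  gap_left :: real
  agrees_right :: bool
  agrees_left :: bool

definition init_knowledge ::
  "nat \<Rightarrow> (nat \<Rightarrow> real) \<Rightarrow> (nat \<Rightarrow> bool) \<Rightarrow> (nat \<Rightarrow> bool) \<Rightarrow> nat \<Rightarrow> knowledge" where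
  "init_knowledge n pos cw b i =
     \<lparr> own_bit = b i,
       gap_right = odist (cw i) (pos i) (pos (right_nb n cw i)),
       gap_left = odist (\<not> cw i) (pos i) (pos (left_nb n cw i)),
       agrees_right = (cw i = cw (right_nb n cw i)),
       agrees_left = (cw i = cw (left_nb n cw i)) \<rparr>"

text \<open>Dynamics of one unit-time round, via the standard pass-through (ghost) picture:
  g i = True iff agent i moves globally clockwise. Since each ghost makes exactly one
  lap, the set of positions is unchanged and agent i ends where agent i+s started,
  s = (#clockwise - #counterclockwise) mod n.\<close>
definition rot_shift :: "nat \<Rightarrow> (nat \<Rightarrow> bool) \<Rightarrow> nat" where
  "rot_shift n g = nat ((int (card {j. j < n \<and> g j}) - int (card {j. j < n \<and> \<not> g j})) mod int n)"

definition next_pos :: "nat \<Rightarrow> (nat \<Rightarrow> real) \<Rightarrow> (nat \<Rightarrow> bool) \<Rightarrow> nat \<Rightarrow> real" where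
  "next_pos n q g i = q ((i + rot_shift n g) mod n)"

text \<open>First collision of agent i: its ghost meets the nearest oppositely moving ghost
  ahead of it (in its direction of motion) after half the separating distance.\<close>
definition first_coll :: "nat \<Rightarrow> (nat \<Rightarrow> real) \<Rightarrow> (nat \<Rightarrow> bool) \<Rightarrow> nat \<Rightarrow> real option" where
  "first_coll n q g i =
     (let S = {odist (g i) (q i) (q j) | j. j < n \<and> g j \<noteq> g i}
      in if S = {} then None else Some (Min S / 2))"

text \<open>Execution of a deterministic protocol: in each round agent i chooses
  own-right (True) / own-left (False) from its knowledge and its observation history.\<close>
fun exec :: "nat \<Rightarrow> (nat \<Rightarrow> real) \<Rightarrow> (nat \<Rightarrow> bool) \<Rightarrow> (nat \<Rightarrow> knowledge)
              \<Rightarrow> (knowledge \<Rightarrow> obs list \<Rightarrow> bool) \<Rightarrow> nat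
              \<Rightarrow> (nat \<Rightarrow> real) \<times> (nat \<Rightarrow> obs list)" where
  "exec n pos cw K ch 0 = (pos, (\<lambda>_. []))"
| "exec n pos cw K ch (Suc k) =
     (let (q, h) = exec n pos cw K ch k;
          g = (\<lambda>i. ch (K i) (h i) = cw i)
      in (next_pos n q g,
          (\<lambda>i. h i @ [(odist (cw i) (q i) (next_pos n q g i), first_coll n q g i)])))"

end

theory Submission
  imports Defs
begin

text \<open>Protocol: in round 1 every agent walks towards the side named by its bit, in rounds 2
  and 3 towards the other side. Reversing every direction undoes a round, so round 3 starts
  from the initial configuration with all directions reversed. In a round, an agent's first
  collision happens at half the gap to its neighbour ahead exactly when that neighbour moves
  the opposite way, which, given whether their orientations agree, determines whether the
  neighbour's bit equals the agent's own. Round 1 probes the neighbour on the bit side,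
  round 3 the neighbour on the other side.\<close>

lemma succ_idx_eq: "i < n \<Longrightarrow> succ_idx n i = (if Suc i = n then 0 else Suc i)"
  by (simp add: succ_idx_def)

lemma pred_idx_eq: "i < n \<Longrightarrow> pred_idx n i = (if i = 0 then n - 1 else i - 1)"
proof (cases i)
  case (Suc k)
  moreover assume "i < n"
  ultimately show ?thesis by (simp add: pred_idx_def)
qed (simp add: pred_idx_def)

lemma valid_config_le_iff:
  assumes "valid_config n pos" "i < n" "j < n"
  shows "pos i \<le> pos j \<longleftrightarrow> i \<le> j"
  using assms unfolding valid_config_def
  by (metis le_less linorder_not_less)

lemma odist_cw_config:
  assumes "valid_config n pos" and "i < n" "j < n"
  shows "odist True (pos i) (pos j) = (if i \<le> j then pos j - pos i else pos j - pos i + 1)"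
proof -
  have "0 \<le> pos i" "pos i < 1" "0 \<le> pos j" "pos j < 1"
    using assms by (auto simp: valid_config_def)
  then show ?thesis
    using valid_config_le_iff[OF assms] by (auto simp: odist_def frac_unique_iff)
qed

lemma odist_ccw_config:
  assumes v: "valid_config n pos" and "i < n" "j < n"
  shows "odist False (pos i) (pos j) = (if j \<le> i then pos i - pos j else pos i - pos j + 1)"
proof -
  have "0 \<le> pos i" "pos i < 1" "0 \<le> pos j" "pos j < 1"
    using assms by (auto simp: valid_config_def)
  then show ?thesis
    using valid_config_le_iff[OF v \<open>j < n\<close> \<open>i < n\<close>] by (auto simp: odist_def frac_unique_iff)
qed

lemma valid_config_less_iff:
  assumes "valid_config n pos" "i < n" "j < n"
  shows "pos i < pos j \<longleftrightarrow> i < j"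
  using valid_config_le_iff[OF assms(1,3,2)] by linarith

definition neighbour :: "nat \<Rightarrow> bool \<Rightarrow> nat \<Rightarrow> nat" where
  "neighbour n c i = (if c then succ_idx n i else pred_idx n i)"

lemma right_nb_eq: "right_nb n cw i = neighbour n (cw i) i"
  and left_nb_eq: "left_nb n cw i = neighbour n (\<not> cw i) i"
  by (simp_all add: right_nb_def left_nb_def neighbour_def)

lemma neighbour_lt: "i < n \<Longrightarrow> neighbour n c i < n"
  by (auto simp: neighbour_def succ_idx_def pred_idx_def)

lemma neighbour_neq: "2 \<le> n \<Longrightarrow> i < n \<Longrightarrow> neighbour n c i \<noteq> i"
  by (auto simp: neighbour_def succ_idx_eq pred_idx_eq)

lemma neighbour_nearest:
  assumes v: "valid_config n pos" and "i < n" "j < n" "j \<noteq> i" "j \<noteq> neighbour n c i"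
  shows "odist c (pos i) (pos (neighbour n c i)) < odist c (pos i) (pos j)"
proof -
  define a where "a = neighbour n c i"
  have "a < n" "j \<noteq> a" using assms by (simp_all add: a_def neighbour_lt)
  have range: "0 \<le> pos k" "pos k < 1" if "k < n" for k
    using v that by (auto simp: valid_config_def)
  note facts = assms(2-4) \<open>j \<noteq> a\<close> range[OF \<open>i < n\<close>] range[OF \<open>j < n\<close>] range[OF \<open>a < n\<close>]
    valid_config_less_iff[OF v \<open>j < n\<close> \<open>a < n\<close>] valid_config_less_iff[OF v \<open>a < n\<close> \<open>j < n\<close>]
  have "odist c (pos i) (pos a) < odist c (pos i) (pos j)"
  proof (cases c)
    case True
    then have "a = (if Suc i = n then 0 else Suc i)"
      using \<open>i < n\<close> by (simp add: a_def neighbour_def succ_idx_eq)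
    then show ?thesis
      using facts True by (auto simp: odist_cw_config[OF v] \<open>a < n\<close>)
  next
    case False
    then have "a = (if i = 0 then n - 1 else i - 1)"
      using \<open>i < n\<close> by (simp add: a_def neighbour_def pred_idx_eq)
    then show ?thesis
      using facts False by (auto simp: odist_ccw_config[OF v] \<open>a < n\<close>)
  qed
  then show ?thesis by (simp add: a_def)
qed

lemma first_coll_neighbour_iff:
  fixes g :: "nat \<Rightarrow> bool"
  assumes v: "valid_config n pos" and "2 \<le> n" "i < n"
  defines "a \<equiv> neighbour n (g i) i"
  shows "first_coll n pos g i = Some (odist (g i) (pos i) (pos a) / 2) \<longleftrightarrow> g a \<noteq> g i"
proof -
  define d where "d = (\<lambda>j. odist (g i) (pos i) (pos j))"
  define S where "S = d ` {j. j < n \<and> g j \<noteq> g i}"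
  have coll: "first_coll n pos g i = (if S = {} then None else Some (Min S / 2))"
    unfolding first_coll_def S_def d_def by (simp add: setcompr_eq_image)
  have "finite S" by (simp add: S_def)
  have "a < n" "a \<noteq> i" using assms by (simp_all add: neighbour_lt neighbour_neq)
  have nearer: "d a < d j" if "j < n" "j \<noteq> i" "j \<noteq> a" for j
    using neighbour_nearest[OF v \<open>i < n\<close> that[unfolded a_def]] by (simp add: d_def a_def)
  show ?thesis
  proof (cases "g a = g i")
    case True
    then have "d a < x" if "x \<in> S" for x
      using that nearer by (auto simp: S_def)
    then have "Min S \<noteq> d a" if "S \<noteq> {}" using Min_in[OF \<open>finite S\<close> that] by fastforce
    then show ?thesis using True by (auto simp: coll d_def)
  next
    case False
    then have "d a \<in> S" using \<open>a < n\<close> by (auto simp: S_def)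
    moreover have "d a \<le> x" if "x \<in> S" for x
      using that nearer by (force simp: S_def less_imp_le)
    ultimately have "Min S = d a" using Min_eqI[OF \<open>finite S\<close>] by blast
    then show ?thesis using False \<open>d a \<in> S\<close> by (auto simp: coll d_def)
  qed
qed

lemma first_coll_cong:
  assumes "\<forall>j<n. q j = pos j" "i < n"
  shows "first_coll n q g i = first_coll n pos g i"
  using assms unfolding first_coll_def by (metis (no_types, lifting))

lemma next_pos_reverse:
  assumes "0 < n" "i < n"
  shows "next_pos n (next_pos n pos g) (\<lambda>j. \<not> g j) i = pos i"
proof -
  define c where "c = int (card {j. j < n \<and> g j})"
  define d where "d = int (card {j. j < n \<and> \<not> g j})"
  have "int (((i + rot_shift n (\<lambda>j. \<not> g j)) mod n + rot_shift n g) mod n)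
        = ((int i + (d - c) mod int n) mod int n + (c - d) mod int n) mod int n"
    using \<open>0 < n\<close> by (simp add: of_nat_mod rot_shift_def c_def d_def)
  also have "\<dots> = int i" using \<open>i < n\<close> by (simp add: mod_simps)
  finally show ?thesis by (simp add: next_pos_def)
qed

definition bounce_move :: "knowledge \<Rightarrow> obs list \<Rightarrow> bool" where
  "bounce_move K h = (if h = [] then own_bit K else \<not> own_bit K)"

text \<open>Rounds 1 and 3 are recorded at history positions 0 and 2; in round 1 the agent
  moves towards its own right iff its bit is set.\<close>

definition hit_right :: "knowledge \<Rightarrow> obs list \<Rightarrow> bool" where
  "hit_right K h = (snd (h ! (if own_bit K then 0 else 2)) = Some (gap_right K / 2))"

definition hit_left :: "knowledge \<Rightarrow> obs list \<Rightarrow> bool" where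
  "hit_left K h = (snd (h ! (if own_bit K then 2 else 0)) = Some (gap_left K / 2))"

definition bounce_decode :: "knowledge \<Rightarrow> obs list \<Rightarrow> bool \<times> bool" where
  "bounce_decode K h =
     (own_bit K \<noteq> (hit_left K h \<longleftrightarrow> agrees_left K),
      own_bit K \<noteq> (hit_right K h \<longleftrightarrow> agrees_right K))"

lemma exec_bounce_move:
  fixes n pos cw b
  defines "K \<equiv> init_knowledge n pos cw b" and "g \<equiv> \<lambda>j. b j = cw j"
  defines "q \<equiv> next_pos n (next_pos n pos g) (\<lambda>j. \<not> g j)"
  shows "snd (snd (exec n pos cw K bounce_move 3) i ! 0) = first_coll n pos g i"
    and "snd (snd (exec n pos cw K bounce_move 3) i ! 2) = first_coll n q (\<lambda>j. \<not> g j) i"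
proof -
  have bit: "own_bit (K j) = b j" for j by (simp add: K_def init_knowledge_def)
  have round1: "(\<lambda>j. bounce_move (K j) [] = cw j) = g"
    by (simp add: bounce_move_def bit g_def)
  have later: "(\<lambda>j. bounce_move (K j) (x j # xs j) = cw j) = (\<lambda>j. \<not> g j)" for x xs
    by (auto simp: bounce_move_def bit g_def)
  show "snd (snd (exec n pos cw K bounce_move 3) i ! 0) = first_coll n pos g i"
    and "snd (snd (exec n pos cw K bounce_move 3) i ! 2) = first_coll n q (\<lambda>j. \<not> g j) i"
    by (simp_all add: numeral_3_eq_3 Let_def round1 later q_def)
qed

theorem proposition6:
  shows "\<exists>(T::nat) (move :: knowledge \<Rightarrow> obs list \<Rightarrow> bool)
            (decode :: knowledge \<Rightarrow> obs list \<Rightarrow> bool \<times> bool).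
           \<forall>(n::nat) (pos :: nat \<Rightarrow> real) (cw :: nat \<Rightarrow> bool) (b :: nat \<Rightarrow> bool).
             4 < n \<longrightarrow> valid_config n pos \<longrightarrow>
             (\<forall>i<n. decode (init_knowledge n pos cw b i)
                        (snd (exec n pos cw (init_knowledge n pos cw b) move T) i)
                     = (b (left_nb n cw i), b (right_nb n cw i)))"
proof (intro exI[of _ 3] exI[of _ bounce_move] exI[of _ bounce_decode] allI impI)
  fix n :: nat and pos :: "nat \<Rightarrow> real" and cw b :: "nat \<Rightarrow> bool" and i :: nat
  assume "4 < n" and v: "valid_config n pos" and "i < n"
  define g where "g = (\<lambda>j. b j = cw j)"
  define h where "h = snd (exec n pos cw (init_knowledge n pos cw b) bounce_move 3) i"
  have "2 \<le> n" using \<open>4 < n\<close> by simp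
  have "\<forall>j<n. next_pos n (next_pos n pos g) (\<lambda>j. \<not> g j) j = pos j"
    using \<open>4 < n\<close> by (simp add: next_pos_reverse)
  then have obs: "snd (h ! 0) = first_coll n pos g i" "snd (h ! 2) = first_coll n pos (\<lambda>j. \<not> g j) i"
    using exec_bounce_move[of n pos cw b i] first_coll_cong[OF _ \<open>i < n\<close>]
    by (simp_all add: h_def g_def)
  note hit = first_coll_neighbour_iff[OF v \<open>2 \<le> n\<close> \<open>i < n\<close>]
  show "bounce_decode (init_knowledge n pos cw b i) h = (b (left_nb n cw i), b (right_nb n cw i))"
    using hit[of g] hit[of "\<lambda>j. \<not> g j"]
    by (cases "b i"; cases "cw i")
      (auto simp: bounce_decode_def hit_left_def hit_right_def obs init_knowledge_def
        left_nb_eq right_nb_eq g_def)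
qed

end
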